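(* Let $\lambda\in\mathbf{C}$ with $\lambda\neq 0$ and $\lambda\neq1$. For every $n\in\mathbf{Z}_{+}$ (nonnegative integers), \[ \lambda H_{n}(x\vert\lambda^{-1})+H_{n}(x\vert\lambda)=(1+\lambda)\sum_{k=0}^{n}\binom{n}{k}H_{n-k}(\lambda^{-1})H_{k}(x\vert\lambda). \]
   Context: For $\mu\in\mathbf{C}$, $\mu\neq1$, the Frobenius–Euler polynomials $H_n(x\vert\mu)$ are defined by the generating function $\frac{1-\mu}{e^{t}-\mu}e^{xt}=\sum_{n=0}^{\infty}H_{n}(x\vert\mu)\frac{t^{n}}{n!}$, and the Frobenius–Euler numbers are $H_n(\mu)=H_n(0\vert\mu)$. *)

theory Defs
  imports "HOL-Computational_Algebra.Formal_Power_Series"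
begin

definition FE_gf :: "complex \<Rightarrow> complex \<Rightarrow> complex fps" where
  "FE_gf x mu = fps_const (1 - mu) / (fps_exp 1 - fps_const mu) * fps_exp x"

definition FE_poly :: "nat \<Rightarrow> complex \<Rightarrow> complex \<Rightarrow> complex" where
  "FE_poly n x mu = fact n * fps_nth (FE_gf x mu) n"

definition FE_num :: "nat \<Rightarrow> complex \<Rightarrow> complex" where
  "FE_num n mu = FE_poly n 0 mu"

end

theory Submission
  imports Defs
begin

unbundle fps_syntax

text \<open>Write \<open>A\<^sub>\<mu> = (1 - \<mu>) / (e\<^sup>t - \<mu>)\<close>, so that the generating function of \<open>H\<^sub>n(x | \<mu>)\<close> is
  \<open>A\<^sub>\<mu> e\<^sup>x\<^sup>t\<close>. Partial fractions give
  \<open>(\<mu> - \<nu>) A\<^sub>\<mu> A\<^sub>\<nu> = (1 - \<nu>) A\<^sub>\<mu> - (1 - \<mu>) A\<^sub>\<nu>\<close>, and for \<open>\<mu> = 1/\<lambda>\<close>, \<open>\<nu> = \<lambda>\<close>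
  this becomes \<open>(1 + \<lambda>) A\<^sub>1\<^sub>/\<^sub>\<lambda> A\<^sub>\<lambda> = \<lambda> A\<^sub>1\<^sub>/\<^sub>\<lambda> + A\<^sub>\<lambda>\<close>. Multiplying by \<open>e\<^sup>x\<^sup>t\<close> and
  comparing coefficients (a binomial convolution) yields the identity.\<close>

lemma FE_gf_eq_mult_fps_exp: "FE_gf x mu = FE_gf 0 mu * fps_exp x"
  by (simp add: FE_gf_def)

lemma FE_gf_mult_denominator:
  assumes "mu \<noteq> 1"
  shows "FE_gf 0 mu * (fps_exp 1 - fps_const mu) = fps_const (1 - mu)"
proof -
  have unit: "(fps_exp 1 - fps_const mu) $ 0 \<noteq> 0"
    using assms by simp
  show ?thesis
    unfolding FE_gf_def fps_divide_unit[OF unit]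
    using inverse_mult_eq_1[OF unit] by (simp add: mult.assoc)
qed

lemma FE_gf_partial_fractions:
  assumes "mu \<noteq> 1" and "nu \<noteq> 1"
  shows "fps_const (mu - nu) * FE_gf 0 mu * FE_gf 0 nu
       = fps_const (1 - nu) * FE_gf 0 mu - fps_const (1 - mu) * FE_gf 0 nu"
proof -
  define D where "D c = fps_exp 1 - fps_const c" for c :: complex
  have A_mu: "FE_gf 0 mu * D mu = fps_const (1 - mu)"
    using FE_gf_mult_denominator[OF assms(1)] by (simp add: D_def)
  have A_nu: "FE_gf 0 nu * D nu = fps_const (1 - nu)"
    using FE_gf_mult_denominator[OF assms(2)] by (simp add: D_def)
  have "(fps_const (mu - nu) * FE_gf 0 mu * FE_gf 0 nu) * (D mu * D nu)
      = fps_const (mu - nu) * (FE_gf 0 mu * D mu) * (FE_gf 0 nu * D nu)"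
    by (simp only: ac_simps)
  also have "\<dots> = fps_const (1 - nu) * fps_const (1 - mu) * (D nu - D mu)"
    unfolding A_mu A_nu by (simp add: D_def ac_simps)
  also have "\<dots> = fps_const (1 - nu) * (FE_gf 0 mu * D mu) * D nu
                 - fps_const (1 - mu) * (FE_gf 0 nu * D nu) * D mu"
    unfolding A_mu A_nu by (simp only: right_diff_distrib ac_simps)
  also have "\<dots> = (fps_const (1 - nu) * FE_gf 0 mu - fps_const (1 - mu) * FE_gf 0 nu) * (D mu * D nu)"
    by (simp only: left_diff_distrib right_diff_distrib ac_simps)
  \<comment> \<open>\<open>D mu * D nu\<close> has nonzero constant term, so it can be cancelled in the domain of power series.\<close>
  finally show ?thesis
    using assms by (simp add: D_def)
qed

lemma FE_gf_inverse_reflection: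
  assumes "lam \<noteq> 0" and "lam \<noteq> 1"
  shows "fps_const lam * FE_gf x (inverse lam) + FE_gf x lam
       = fps_const (1 + lam) * FE_gf 0 (inverse lam) * FE_gf x lam"
proof -
  have "inverse lam \<noteq> 1"
    using assms(2) by (metis inverse_1 inverse_inverse_eq)
  from FE_gf_partial_fractions[OF this assms(2)]
  have "fps_const (lam / (1 - lam)) *
          (fps_const (inverse lam - lam) * FE_gf 0 (inverse lam) * FE_gf 0 lam)
      = fps_const (lam / (1 - lam)) *
          (fps_const (1 - lam) * FE_gf 0 (inverse lam) - fps_const (1 - inverse lam) * FE_gf 0 lam)"
    by simp
  moreover have "lam / (1 - lam) * (inverse lam - lam) = 1 + lam"
    and "lam / (1 - lam) * (1 - lam) = lam"
    and "lam / (1 - lam) * (1 - inverse lam) = - 1"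
    using assms by (simp_all add: field_simps)
  ultimately have "fps_const (1 + lam) * FE_gf 0 (inverse lam) * FE_gf 0 lam
           = fps_const lam * FE_gf 0 (inverse lam) + FE_gf 0 lam"
    by (simp only: right_diff_distrib mult.assoc[symmetric] fps_const_mult) (simp flip: fps_const_neg)
  then show ?thesis
    by (subst (1 2 3) FE_gf_eq_mult_fps_exp) (simp add: algebra_simps)
qed

lemma fact_mult_fps_mult_nth:
  fixes f g :: "'a :: {comm_semiring_1, semiring_char_0} fps"
  shows "fact n * (f * g) $ n
       = (\<Sum>k=0..n. of_nat (n choose k) * (fact (n - k) * f $ (n - k)) * (fact k * g $ k))"
proof -
  have "fact n * (f * g) $ n = (\<Sum>k=0..n. fact n * (g $ k * f $ (n - k)))"
    by (simp add: fps_mult_nth mult.commute[of f g] sum_distrib_left)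
  also have "\<dots> = (\<Sum>k=0..n. of_nat (n choose k) * (fact (n - k) * f $ (n - k)) * (fact k * g $ k))"
  proof (rule sum.cong[OF refl])
    fix k assume "k \<in> {0..n}"
    then have "(fact n :: 'a) = fact k * fact (n - k) * of_nat (n choose k)"
      by (metis atLeastAtMost_iff binomial_fact_lemma of_nat_fact of_nat_mult)
    then show "fact n * (g $ k * f $ (n - k))
             = of_nat (n choose k) * (fact (n - k) * f $ (n - k)) * (fact k * g $ k)"
      by (simp only: ac_simps)
  qed
  finally show ?thesis .
qed

theorem theorem2:
  fixes lam x :: complex and n :: nat
  assumes "lam \<noteq> 0" and "lam \<noteq> 1"
  shows "lam * FE_poly n x (inverse lam) + FE_poly n x lam
         = (1 + lam) * (\<Sum>k=0..n. of_nat (n choose k) * FE_num (n - k) (inverse lam) * FE_poly k x lam)"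
proof -
  have "lam * FE_poly n x (inverse lam) + FE_poly n x lam
      = fact n * (fps_const lam * FE_gf x (inverse lam) + FE_gf x lam) $ n"
    unfolding FE_poly_def by (simp add: algebra_simps)
  also have "\<dots> = (1 + lam) * (fact n * (FE_gf 0 (inverse lam) * FE_gf x lam) $ n)"
    unfolding FE_gf_inverse_reflection[OF assms] by (simp add: mult.assoc)
  also have "\<dots> = (1 + lam) * (\<Sum>k=0..n. of_nat (n choose k) * FE_num (n - k) (inverse lam) * FE_poly k x lam)"
    unfolding fact_mult_fps_mult_nth FE_num_def FE_poly_def ..
  finally show ?thesis .
qed

end
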